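(* Let $\Pi$ be an $n$-dimensional linear space satisfying the exchange axiom and the axiom (P2), let $0<k<n-1$, let $B=\{p_1,\dots,p_{n+1}\}$ be a base of $\Pi$, and let $\mathcal{B}_k$ be the base subset of $\mathcal{G}_k(\Pi)$ associated with $B$. If $\mathcal{R}$ is a maximal inexact subset of $\mathcal{B}_k$, then there exist distinct indices $i,j$ such that $$\mathcal{R}=\mathcal{B}_k(-i)\cup\mathcal{B}_k(p_ip_j).$$
   Context: A linear space $\Pi=(P,\mathcal{L})$ is a set $P$ of points with a family $\mathcal{L}$ of proper subsets (lines) such that each line has at least two points and any two distinct points $p,q$ lie on exactly one line $pq$. A subspace is a set $S\subset P$ with $pq\subset S$ for all distinct $p,q\in S$; $\overline{X}$ is the smallest subspace containing $X$. A set $X$ is independent if $\overline{X}$ is not spanned by a proper subset of $X$; a base of $\Pi$ is an independent set spanning $P$. A subspace is $m$-dimensional if $m+1$ is the smallest number of points spanning it. Exchange axiom: for every $X\subset P$ and $p_1,p_2\in P\setminus\overline{X}$, $p_2\in\overline{X\cup\{p_1\}}$ implies $p_1\in\overline{X\cup\{p_2\}}$. Axiom (P2): every line has at least three points. $\mathcal{G}_k(\Pi)$ is the set of $k$-dimensional subspaces; the base subset of $\mathcal{G}_k(\Pi)$ associated with a base $B$ is the set of all $k$-dimensional subspaces spanned by points of $B$. A subset $\mathcal{R}\subset\mathcal{B}_k$ is exact if $\mathcal{B}_k$ is the unique base subset of $\mathcal{G}_k(\Pi)$ containing $\mathcal{R}$, and inexact otherwise; a maximal inexact subset is one maximal under inclusion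 among inexact subsets of $\mathcal{B}_k$. $\mathcal{B}_k(-i)$ is the set of elements of $\mathcal{B}_k$ not containing $p_i$, and $\mathcal{B}_k(p_ip_j)$ is the set of elements of $\mathcal{B}_k$ containing the line $p_ip_j$. *)

theory Defs
  imports Main
begin

definition linear_space :: "'a set \<Rightarrow> 'a set set \<Rightarrow> bool" where
  "linear_space P L \<longleftrightarrow>
     (\<forall>l\<in>L. l \<subset> P \<and> (\<exists>x y. x \<in> l \<and> y \<in> l \<and> x \<noteq> y)) \<and>
     (\<forall>p\<in>P. \<forall>q\<in>P. p \<noteq> q \<longrightarrow> (\<exists>!l. l \<in> L \<and> p \<in> l \<and> q \<in> l))"

definition line_of :: "'a set set \<Rightarrow> 'a \<Rightarrow> 'a \<Rightarrow> 'a set" where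
  "line_of L p q = (THE l. l \<in> L \<and> p \<in> l \<and> q \<in> l)"

definition subspace :: "'a set \<Rightarrow> 'a set set \<Rightarrow> 'a set \<Rightarrow> bool" where
  "subspace P L S \<longleftrightarrow> S \<subseteq> P \<and>
     (\<forall>p\<in>S. \<forall>q\<in>S. p \<noteq> q \<longrightarrow> line_of L p q \<subseteq> S)"

definition span :: "'a set \<Rightarrow> 'a set set \<Rightarrow> 'a set \<Rightarrow> 'a set" where
  "span P L X = \<Inter>{S. subspace P L S \<and> X \<subseteq> S}"

definition independent :: "'a set \<Rightarrow> 'a set set \<Rightarrow> 'a set \<Rightarrow> bool" where
  "independent P L X \<longleftrightarrow> X \<subseteq> P \<and> (\<forall>Y. Y \<subset> X \<longrightarrow> span P L Y \<noteq> span P L X)"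

definition is_base :: "'a set \<Rightarrow> 'a set set \<Rightarrow> 'a set \<Rightarrow> bool" where
  "is_base P L B \<longleftrightarrow> independent P L B \<and> span P L B = P"

definition has_dim :: "'a set \<Rightarrow> 'a set set \<Rightarrow> 'a set \<Rightarrow> nat \<Rightarrow> bool" where
  "has_dim P L S m \<longleftrightarrow> subspace P L S \<and>
     (\<exists>X. X \<subseteq> P \<and> finite X \<and> card X = m + 1 \<and> span P L X = S) \<and>
     (\<forall>X. X \<subseteq> P \<and> finite X \<and> span P L X = S \<longrightarrow> m + 1 \<le> card X)"

definition exchange_axiom :: "'a set \<Rightarrow> 'a set set \<Rightarrow> bool" where
  "exchange_axiom P L \<longleftrightarrow>
     (\<forall>X p1 p2. X \<subseteq> P \<longrightarrow> p1 \<in> P - span P L X \<longrightarrow> p2 \<in> P - span P L X \<longrightarrow>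
        p2 \<in> span P L (X \<union> {p1}) \<longrightarrow> p1 \<in> span P L (X \<union> {p2}))"

definition axiom_P2 :: "'a set set \<Rightarrow> bool" where
  "axiom_P2 L \<longleftrightarrow> (\<forall>l\<in>L. \<exists>x y z. x \<in> l \<and> y \<in> l \<and> z \<in> l \<and> x \<noteq> y \<and> y \<noteq> z \<and> x \<noteq> z)"

definition Grass :: "'a set \<Rightarrow> 'a set set \<Rightarrow> nat \<Rightarrow> 'a set set" where
  "Grass P L k = {S. has_dim P L S k}"

definition base_subset :: "'a set \<Rightarrow> 'a set set \<Rightarrow> nat \<Rightarrow> 'a set \<Rightarrow> 'a set set" where
  "base_subset P L k B = {S \<in> Grass P L k. \<exists>X. X \<subseteq> B \<and> span P L X = S}"

definition exact_subset :: "'a set \<Rightarrow> 'a set set \<Rightarrow> nat \<Rightarrow> 'a set \<Rightarrow> 'a set set \<Rightarrow> bool" where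
  "exact_subset P L k B R \<longleftrightarrow> R \<subseteq> base_subset P L k B \<and>
     (\<forall>B'. is_base P L B' \<and> R \<subseteq> base_subset P L k B' \<longrightarrow>
            base_subset P L k B' = base_subset P L k B)"

definition inexact_subset :: "'a set \<Rightarrow> 'a set set \<Rightarrow> nat \<Rightarrow> 'a set \<Rightarrow> 'a set set \<Rightarrow> bool" where
  "inexact_subset P L k B R \<longleftrightarrow> R \<subseteq> base_subset P L k B \<and> \<not> exact_subset P L k B R"

definition maximal_inexact :: "'a set \<Rightarrow> 'a set set \<Rightarrow> nat \<Rightarrow> 'a set \<Rightarrow> 'a set set \<Rightarrow> bool" where
  "maximal_inexact P L k B R \<longleftrightarrow> inexact_subset P L k B R \<and>
     (\<forall>R'. R \<subset> R' \<and> R' \<subseteq> base_subset P L k B \<longrightarrow> \<not> inexact_subset P L k B R')"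

end

(*
  If R is inexact, then R fails to separate some ordered pair of base points: there are
  i \<noteq> j such that every member of R containing p_i also contains p_j. Otherwise fix i and
  choose, for every j \<noteq> i, some S_j \<in> R containing p_i but not p_j. By the exchange axiom,
  spans of subsets of an independent set intersect like the subsets themselves. Applied to B
  this gives \<Inter>S_j = {p_i}; applied to a base B' with R \<subseteq> B_k(B') it shows that {p_i} is
  spanned by \<Inter>(S_j \<inter> B'), so p_i \<in> B'. Hence B \<subseteq> B', and so B' = B.

  Thus R \<subseteq> B_k(-i) \<union> B_k(p_i p_j). This set is itself inexact: replacing p_i by a third
  point q of the line p_i p_j (axiom P2) gives a base B' with B_k(-i) \<union> B_k(p_i p_j) \<subseteq> B_k(B'),
  while the span of p_i and k base points other than p_i, p_j (they exist as k < n - 1) is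
  in B_k(B) but not in B_k(B'). Maximality of R gives equality.
*)
theory Submission
  imports Defs
begin

abbreviation base_subset_avoiding :: "'a set \<Rightarrow> 'a set set \<Rightarrow> nat \<Rightarrow> 'a set \<Rightarrow> 'a \<Rightarrow> 'a set set"
  where "base_subset_avoiding P L k B a \<equiv> {S \<in> base_subset P L k B. a \<notin> S}"

abbreviation base_subset_containing :: "'a set \<Rightarrow> 'a set set \<Rightarrow> nat \<Rightarrow> 'a set \<Rightarrow> 'a set \<Rightarrow> 'a set set"
  where "base_subset_containing P L k B X \<equiv> {S \<in> base_subset P L k B. X \<subseteq> S}"

lemma independent_subset_points: "independent P L C \<Longrightarrow> C \<subseteq> P"
  unfolding independent_def by blast

lemma is_baseD: "is_base P L B \<Longrightarrow> independent P L B"  "is_base P L B \<Longrightarrow> span P L B = P"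
  unfolding is_base_def by blast+

locale lin_space =
  fixes P :: "'a set" and L :: "'a set set"
  assumes linear_space: "linear_space P L"
begin

lemma line_subset_points: "l \<in> L \<Longrightarrow> l \<subseteq> P"
  using linear_space unfolding linear_space_def by (simp add: less_imp_le)

lemma unique_line: "p \<in> P \<Longrightarrow> q \<in> P \<Longrightarrow> p \<noteq> q \<Longrightarrow> \<exists>!l. l \<in> L \<and> p \<in> l \<and> q \<in> l"
  using linear_space unfolding linear_space_def by simp

lemma line_of_spec:
  assumes "p \<in> P" "q \<in> P" "p \<noteq> q"
  shows "line_of L p q \<in> L" "p \<in> line_of L p q" "q \<in> line_of L p q"
  using theI'[OF unique_line[OF assms]] unfolding line_of_def by auto

lemma line_of_eq:
  assumes "l \<in> L" "p \<in> l" "q \<in> l" "p \<noteq> q"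
  shows "line_of L p q = l"
proof -
  have "p \<in> P" "q \<in> P"
    using assms line_subset_points by auto
  then show ?thesis
    unfolding line_of_def using assms by (intro the1_equality unique_line) auto
qed

lemma subspace_points: "subspace P L P"
  unfolding subspace_def using line_of_spec line_subset_points by blast

lemma span_least: "subspace P L S \<Longrightarrow> X \<subseteq> S \<Longrightarrow> span P L X \<subseteq> S"
  unfolding span_def by blast

lemma span_subset_points: "X \<subseteq> P \<Longrightarrow> span P L X \<subseteq> P"
  using span_least subspace_points by blast

lemma span_superset: "X \<subseteq> P \<Longrightarrow> X \<subseteq> span P L X"
  unfolding span_def using subspace_points by blast

lemma subspace_span:
  assumes "X \<subseteq> P"
  shows "subspace P L (span P L X)"
  unfolding subspace_def
proof (intro conjI ballI impI)
  show "span P L X \<subseteq> P"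
    using assms by (rule span_subset_points)
  fix a b
  assume a: "a \<in> span P L X" and b: "b \<in> span P L X" and "a \<noteq> b"
  show "line_of L a b \<subseteq> span P L X"
    unfolding span_def
  proof (rule Inter_greatest)
    fix S
    assume "S \<in> {S. subspace P L S \<and> X \<subseteq> S}"
    moreover from this have "a \<in> S" "b \<in> S"
      using a b unfolding span_def by auto
    ultimately show "line_of L a b \<subseteq> S"
      using \<open>a \<noteq> b\<close> unfolding subspace_def by blast
  qed
qed

lemma span_mono: "X \<subseteq> Y \<Longrightarrow> Y \<subseteq> P \<Longrightarrow> span P L X \<subseteq> span P L Y"
  by (meson span_least span_superset subspace_span subset_trans)

lemma span_subspace_eq: "subspace P L S \<Longrightarrow> span P L S = S"
  by (meson span_least span_superset subspace_def subset_antisym order_refl)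

lemma span_empty: "span P L {} = {}"
  by (rule span_subspace_eq) (simp add: subspace_def)

lemma span_singleton: "x \<in> P \<Longrightarrow> span P L {x} = {x}"
  by (rule span_subspace_eq) (simp add: subspace_def)

lemma line_of_subset_span:
  "X \<subseteq> P \<Longrightarrow> a \<in> span P L X \<Longrightarrow> b \<in> span P L X \<Longrightarrow> a \<noteq> b \<Longrightarrow> line_of L a b \<subseteq> span P L X"
  using subspace_span unfolding subspace_def by blast

lemma span_finite_support:
  assumes "X \<subseteq> P" "x \<in> span P L X"
  obtains Y where "finite Y" "Y \<subseteq> X" "x \<in> span P L Y"
proof -
  define F where "F = (\<Union>Y \<in> {Y. finite Y \<and> Y \<subseteq> X}. span P L Y)"
  have "subspace P L F"
    unfolding subspace_def
  proof (intro conjI ballI impI)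
    show "F \<subseteq> P"
      unfolding F_def using assms(1) span_subset_points by blast
    fix a b
    assume "a \<in> F" "b \<in> F" "a \<noteq> b"
    then obtain Y1 Y2 where Y: "finite Y1" "Y1 \<subseteq> X" "a \<in> span P L Y1"
        "finite Y2" "Y2 \<subseteq> X" "b \<in> span P L Y2"
      unfolding F_def by blast
    then have sub: "Y1 \<union> Y2 \<subseteq> P"
      using assms(1) by blast
    have "a \<in> span P L (Y1 \<union> Y2)" "b \<in> span P L (Y1 \<union> Y2)"
      using Y span_mono[OF _ sub] by blast+
    then have "line_of L a b \<subseteq> span P L (Y1 \<union> Y2)"
      using line_of_subset_span[OF sub] \<open>a \<noteq> b\<close> by blast
    then show "line_of L a b \<subseteq> F"
      unfolding F_def using Y by blast
  qed
  moreover have "X \<subseteq> F"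
  proof
    fix y
    assume "y \<in> X"
    then have "y \<in> span P L {y}" "{y} \<subseteq> X"
      using span_singleton assms(1) by auto
    then show "y \<in> F"
      unfolding F_def by blast
  qed
  ultimately have "x \<in> F"
    using span_least assms(2) by blast
  then show thesis
    using that unfolding F_def by auto
qed

lemma not_in_span_of_independent:
  assumes ind: "independent P L C" and "Z \<subseteq> C" "b \<in> C" "b \<notin> Z"
  shows "b \<notin> span P L Z"
proof
  assume "b \<in> span P L Z"
  have CP: "C - {b} \<subseteq> P"
    using independent_subset_points[OF ind] by blast
  have "span P L Z \<subseteq> span P L (C - {b})"
    using assms(2,4) CP by (intro span_mono) auto
  with \<open>b \<in> span P L Z\<close> have "C \<subseteq> span P L (C - {b})"
    using span_superset[OF CP] by blast
  then have "span P L C \<subseteq> span P L (C - {b})"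
    using span_least[OF subspace_span[OF CP]] by blast
  moreover have "span P L (C - {b}) \<subseteq> span P L C"
    using span_mono[of "C - {b}" C] independent_subset_points[OF ind] by blast
  moreover have "C - {b} \<subset> C"
    using \<open>b \<in> C\<close> by blast
  ultimately show False
    using ind unfolding independent_def by blast
qed

lemma subspace_of_base_subset:
  assumes "S \<in> base_subset P L k C" "C \<subseteq> P"
  shows "subspace P L S"
proof -
  obtain X where "X \<subseteq> C" "span P L X = S"
    using assms(1) unfolding base_subset_def by blast
  then show ?thesis
    using subspace_span assms(2) by blast
qed

lemma span_Int_base_subset:
  assumes S: "S \<in> base_subset P L k C" and CP: "C \<subseteq> P"
  shows "span P L (S \<inter> C) = S"
proof
  obtain X where X: "X \<subseteq> C" "span P L X = S"
    using S unfolding base_subset_def by blast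
  then have "X \<subseteq> S \<inter> C"
    using span_superset CP by blast
  then show "S \<subseteq> span P L (S \<inter> C)"
    using X span_mono CP by blast
  show "span P L (S \<inter> C) \<subseteq> S"
    using span_least[OF subspace_of_base_subset[OF S CP]] by blast
qed

lemma third_point_on_line:
  assumes "axiom_P2 L" "l \<in> L"
  obtains q where "q \<in> l" "q \<noteq> a" "q \<noteq> c"
proof -
  obtain x y z where "x \<in> l" "y \<in> l" "z \<in> l" "x \<noteq> y" "y \<noteq> z" "x \<noteq> z"
    using assms unfolding axiom_P2_def by blast
  then show thesis
    using that by (cases "x \<in> {a, c}"; cases "y \<in> {a, c}") auto
qed

lemma third_point_not_in_independent:
  assumes ind: "independent P L C" and "a \<in> C" "c \<in> C" "a \<noteq> c"
    and "q \<in> line_of L a c" "q \<noteq> a" "q \<noteq> c"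
  shows "q \<notin> C"
proof
  assume "q \<in> C"
  have CP: "C - {q} \<subseteq> P"
    using independent_subset_points[OF ind] by blast
  then have "a \<in> span P L (C - {q})" "c \<in> span P L (C - {q})"
    using assms span_superset by blast+
  then have "q \<in> span P L (C - {q})"
    using line_of_subset_span[OF CP] assms by blast
  then show False
    using not_in_span_of_independent[OF ind _ \<open>q \<in> C\<close>] by blast
qed

lemma span_replace_by_third_point:
  assumes XP: "X \<subseteq> P" and "a \<in> X" "c \<in> X" "a \<noteq> c"
    and q: "q \<in> line_of L a c" "q \<noteq> a" "q \<noteq> c"
  shows "span P L (insert q (X - {a})) = span P L X"
proof
  have "a \<in> P" "c \<in> P"
    using XP assms by auto
  note line = line_of_spec[OF this \<open>a \<noteq> c\<close>]
  define X' where "X' = insert q (X - {a})"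
  have X'P: "X' \<subseteq> P"
    unfolding X'_def using XP q(1) line_subset_points[OF line(1)] by blast
  have "line_of L a c \<subseteq> span P L X"
    using line_of_subset_span[OF XP] span_superset[OF XP] assms by blast
  then have "X' \<subseteq> span P L X"
    unfolding X'_def using span_superset[OF XP] q(1) by blast
  then show "span P L X' \<subseteq> span P L X"
    using span_least[OF subspace_span[OF XP]] by blast
  have "line_of L q c = line_of L a c"
    using line_of_eq[OF line(1) q(1) line(3) q(3)] .
  moreover have "line_of L q c \<subseteq> span P L X'"
    using line_of_subset_span[OF X'P] span_superset[OF X'P] q assms unfolding X'_def by blast
  ultimately have "X \<subseteq> span P L X'"
    using line(2) span_superset[OF X'P] unfolding X'_def by blast
  then show "span P L X \<subseteq> span P L X'"
    using span_least[OF subspace_span[OF X'P]] by blast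
qed

lemma base_subset_exchange_superset:
  assumes BP: "B \<subseteq> P" and "a \<in> B" "c \<in> B" "a \<noteq> c"
    and q: "q \<in> line_of L a c" "q \<noteq> a" "q \<noteq> c"
  shows "base_subset_avoiding P L k B a \<union> base_subset_containing P L k B (line_of L a c)
    \<subseteq> base_subset P L k (insert q (B - {a}))"
proof
  fix S
  assume S: "S \<in> base_subset_avoiding P L k B a \<union> base_subset_containing P L k B (line_of L a c)"
  then have SB: "S \<in> base_subset P L k B"
    by blast
  have "S \<inter> B \<subseteq> P" and span_SB: "span P L (S \<inter> B) = S"
    using BP span_Int_base_subset[OF SB BP] by auto
  show "S \<in> base_subset P L k (insert q (B - {a}))"
  proof (cases "a \<in> S")
    case False
    then have "S \<inter> B \<subseteq> insert q (B - {a})"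
      by blast
    then show ?thesis
      using SB span_SB unfolding base_subset_def by blast
  next
    case True
    then have "line_of L a c \<subseteq> S"
      using S by blast
    moreover have "c \<in> line_of L a c"
      using line_of_spec(3) BP assms(2-4) by blast
    ultimately have "c \<in> S \<inter> B"
      using \<open>c \<in> B\<close> by blast
    then have "span P L (insert q (S \<inter> B - {a})) = S"
      using span_replace_by_third_point[OF \<open>S \<inter> B \<subseteq> P\<close> _ _ \<open>a \<noteq> c\<close> q] span_SB True \<open>a \<in> B\<close>
      by simp
    moreover have "insert q (S \<inter> B - {a}) \<subseteq> insert q (B - {a})"
      by blast
    ultimately show ?thesis
      using SB unfolding base_subset_def by blast
  qed
qed

lemma span_notin_base_subset_exchange:
  assumes ind: "independent P L B" and Y: "Y \<subseteq> B" "a \<in> Y" "c \<in> B" "c \<notin> Y" "a \<noteq> c"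
    and q: "q \<in> line_of L a c" "q \<noteq> a" "q \<noteq> c"
  shows "span P L Y \<notin> base_subset P L k (insert q (B - {a}))"
proof
  assume "span P L Y \<in> base_subset P L k (insert q (B - {a}))"
  then obtain X where X: "X \<subseteq> insert q (B - {a})" "span P L X = span P L Y"
    unfolding base_subset_def by blast
  have BP: "B \<subseteq> P"
    using independent_subset_points[OF ind] .
  then have YP: "Y \<subseteq> P" and "a \<in> B" "a \<in> P" "c \<in> P"
    using Y by auto
  note line = line_of_spec[OF \<open>a \<in> P\<close> \<open>c \<in> P\<close> \<open>a \<noteq> c\<close>]
  have "q \<in> P"
    using q(1) line_subset_points[OF line(1)] by blast
  have aY: "a \<in> span P L Y"
    using span_superset[OF YP] Y(2) by blast
  have "q \<notin> span P L Y"
  proof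
    assume "q \<in> span P L Y"
    then have "line_of L a q \<subseteq> span P L Y"
      using line_of_subset_span[OF YP aY] q(2) by blast
    moreover have "line_of L a q = line_of L a c"
      using line_of_eq[OF line(1,2) q(1) q(2)[symmetric]] .
    ultimately have "c \<in> span P L Y"
      using line(3) by blast
    then show False
      using not_in_span_of_independent[OF ind Y(1) Y(3,4)] by blast
  qed
  moreover have "X \<subseteq> span P L Y"
    using X(1) BP \<open>q \<in> P\<close> span_superset[of X] X(2) by blast
  ultimately have "X \<subseteq> B - {a}"
    using X(1) by blast
  then have "a \<in> span P L (B - {a})"
    using aY X(2) span_mono[of X "B - {a}"] BP by blast
  then show False
    using not_in_span_of_independent[OF ind _ \<open>a \<in> B\<close>] by blast
qed

context
  fixes n :: nat
  assumes dim: "has_dim P L P n"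
begin

lemma card_spanning_ge: "X \<subseteq> P \<Longrightarrow> finite X \<Longrightarrow> span P L X = P \<Longrightarrow> n + 1 \<le> card X"
  using dim unfolding has_dim_def by blast

lemma is_base_of_card:
  assumes "finite B" "B \<subseteq> P" "card B = n + 1" "span P L B = P"
  shows "is_base P L B"
  unfolding is_base_def independent_def
proof (intro conjI allI impI assms)
  fix Y
  assume "Y \<subset> B"
  then have "card Y < n + 1" "finite Y" "Y \<subseteq> P"
    using assms psubset_card_mono[of B Y] finite_subset[of Y B] by auto
  then show "span P L Y \<noteq> span P L B"
    using card_spanning_ge[of Y] assms(4) by auto
qed

text \<open>If fewer than \<open>k + 1\<close> points spanned \<open>span Y\<close>, they would span \<open>P\<close> together with
  the \<open>n - k\<close> points of \<open>B - Y\<close>.\<close>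

lemma has_dim_span_subset:
  assumes B: "finite B" "B \<subseteq> P" "card B = n + 1" "span P L B = P"
    and Y: "Y \<subseteq> B" "card Y = k + 1"
  shows "has_dim P L (span P L Y) k"
  unfolding has_dim_def
proof (intro conjI allI impI)
  have YP: "Y \<subseteq> P"
    using Y B by blast
  show "subspace P L (span P L Y)"
    using YP by (rule subspace_span)
  have "finite Y"
    using finite_subset[OF Y(1) B(1)] .
  then show "\<exists>X. X \<subseteq> P \<and> finite X \<and> card X = k + 1 \<and> span P L X = span P L Y"
    using YP Y(2) by blast
  fix X
  assume X: "X \<subseteq> P \<and> finite X \<and> span P L X = span P L Y"
  define Z where "Z = X \<union> (B - Y)"
  have ZP: "Z \<subseteq> P" and "finite Z"
    unfolding Z_def using X B by auto
  have "span P L X \<subseteq> span P L Z"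
    using span_mono[OF _ ZP] unfolding Z_def by blast
  then have "Y \<subseteq> span P L Z"
    using X span_superset[OF YP] by blast
  moreover have "B - Y \<subseteq> span P L Z"
    using span_superset[OF ZP] unfolding Z_def by blast
  ultimately have "span P L B \<subseteq> span P L Z"
    using span_least[OF subspace_span[OF ZP], of B] by blast
  then have "span P L Z = P"
    using span_subset_points[OF ZP] B(4) by blast
  then have "n + 1 \<le> card Z"
    using card_spanning_ge[OF ZP \<open>finite Z\<close>] by blast
  moreover have "card Z \<le> card X + (n - k)"
    using card_Un_le[of X "B - Y"] card_Diff_subset[OF finite_subset[OF Y(1) B(1)] Y(1)] B Y
    unfolding Z_def by simp
  moreover have "k \<le> n"
    using card_mono[OF B(1) Y(1)] B Y by simp
  ultimately show "k + 1 \<le> card X"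
    by linarith
qed

lemma is_base_exchange:
  assumes B: "is_base P L B" "card B = n + 1" and "a \<in> B" "c \<in> B" "a \<noteq> c"
    and q: "q \<in> line_of L a c" "q \<noteq> a" "q \<noteq> c"
  shows "is_base P L (insert q (B - {a}))"
proof (rule is_base_of_card)
  note ind = is_baseD(1)[OF B(1)]
  have BP: "B \<subseteq> P"
    using independent_subset_points[OF ind] .
  have "finite B"
    using B(2) by (simp add: card_ge_0_finite)
  show "finite (insert q (B - {a}))"
    using \<open>finite B\<close> by simp
  have "q \<notin> B"
    using third_point_not_in_independent[OF ind] assms by blast
  then show "card (insert q (B - {a})) = n + 1"
    using \<open>finite B\<close> B(2) \<open>a \<in> B\<close> by (simp add: card_Diff_singleton)
  have "q \<in> P"
    using line_of_spec(1) line_subset_points BP assms by blast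
  then show "insert q (B - {a}) \<subseteq> P"
    using BP by blast
  show "span P L (insert q (B - {a})) = P"
    using span_replace_by_third_point[OF BP] assms is_baseD(2)[OF B(1)] by simp
qed

lemma base_subset_exchange_ne:
  assumes B: "is_base P L B" "card B = n + 1" and "k < n" "a \<in> B" "c \<in> B" "a \<noteq> c"
    and q: "q \<in> line_of L a c" "q \<noteq> a" "q \<noteq> c"
  shows "base_subset P L k (insert q (B - {a})) \<noteq> base_subset P L k B"
proof -
  note ind = is_baseD(1)[OF B(1)]
  have BP: "B \<subseteq> P"
    using independent_subset_points[OF ind] .
  have "finite B"
    using B(2) by (simp add: card_ge_0_finite)
  have "card (B - {a, c}) = n - 1"
    using B(2) assms \<open>finite B\<close> by (simp add: card_Diff_subset)
  then have "k \<le> card (B - {a, c})"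
    using \<open>k < n\<close> by simp
  then obtain W where W: "W \<subseteq> B - {a, c}" "card W = k" "finite W"
    by (rule obtain_subset_with_card_n)
  define Y where "Y = insert a W"
  have YB: "Y \<subseteq> B" and "c \<notin> Y"
    unfolding Y_def using W \<open>a \<in> B\<close> \<open>a \<noteq> c\<close> by auto
  have "card Y = k + 1"
    unfolding Y_def using W by (auto simp: card_insert_if)
  then have "span P L Y \<in> base_subset P L k B"
    using has_dim_span_subset[OF \<open>finite B\<close> BP B(2) is_baseD(2)[OF B(1)] YB] YB
    unfolding base_subset_def Grass_def by blast
  moreover have "span P L Y \<notin> base_subset P L k (insert q (B - {a}))"
    using span_notin_base_subset_exchange[OF ind YB _ \<open>c \<in> B\<close> \<open>c \<notin> Y\<close> \<open>a \<noteq> c\<close> q]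
    unfolding Y_def by blast
  ultimately show ?thesis
    by blast
qed

lemma inexact_subset_avoiding_Un_containing_line:
  assumes "axiom_P2 L" and B: "is_base P L B" "card B = n + 1"
    and "k < n" "a \<in> B" "c \<in> B" "a \<noteq> c"
  shows "inexact_subset P L k B
    (base_subset_avoiding P L k B a \<union> base_subset_containing P L k B (line_of L a c))"
proof -
  have BP: "B \<subseteq> P"
    using independent_subset_points[OF is_baseD(1)[OF B(1)]] .
  have "line_of L a c \<in> L"
    using line_of_spec(1) BP assms by blast
  then obtain q where q: "q \<in> line_of L a c" "q \<noteq> a" "q \<noteq> c"
    using third_point_on_line[OF \<open>axiom_P2 L\<close>] by blast
  have "is_base P L (insert q (B - {a}))"
    using is_base_exchange[OF B _ _ _ q] assms by blast
  moreover have "base_subset P L k (insert q (B - {a})) \<noteq> base_subset P L k B"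
    using base_subset_exchange_ne[OF B _ _ _ _ q] assms by blast
  moreover have "base_subset_avoiding P L k B a \<union> base_subset_containing P L k B (line_of L a c)
      \<subseteq> base_subset P L k (insert q (B - {a}))"
    using base_subset_exchange_superset[OF BP _ _ _ q] assms by blast
  ultimately show ?thesis
    unfolding inexact_subset_def exact_subset_def by blast
qed

end

end

locale exchange_space = lin_space +
  assumes exchange: "exchange_axiom P L"
begin

lemma exchange_span:
  assumes "X \<subseteq> P" "x \<in> P" "x \<notin> span P L X" "y \<in> P" "y \<notin> span P L X"
    and "y \<in> span P L (insert x X)"
  shows "x \<in> span P L (insert y X)"
  using exchange[unfolded exchange_axiom_def, rule_format, of X x y] assms by simp

lemma span_insert_Int_span:
  assumes ind: "independent P L C" and "insert b A \<subseteq> C" "Z \<subseteq> C" "b \<notin> A" "b \<notin> Z"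
    and x: "x \<in> span P L (insert b A)" "x \<in> span P L Z"
  shows "x \<in> span P L A"
proof (rule ccontr)
  assume "x \<notin> span P L A"
  have "C \<subseteq> P"
    using independent_subset_points[OF ind] .
  then have AP: "A \<subseteq> P" and ZP: "Z \<subseteq> P" and AZP: "A \<union> Z \<subseteq> P" and "b \<in> P"
    using assms(2,3) by auto
  have "x \<in> P"
    using x(2) span_subset_points[OF ZP] by blast
  moreover have "b \<notin> span P L A"
    using not_in_span_of_independent[OF ind, of A b] assms(2,4) by blast
  ultimately have "b \<in> span P L (insert x A)"
    using exchange_span[OF AP \<open>b \<in> P\<close> _ _ \<open>x \<notin> span P L A\<close> x(1)] by blast
  moreover have "span P L (insert x A) \<subseteq> span P L (A \<union> Z)"
  proof (rule span_least[OF subspace_span[OF AZP]])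
    have "span P L Z \<subseteq> span P L (A \<union> Z)"
      using span_mono[OF _ AZP] by blast
    then show "insert x A \<subseteq> span P L (A \<union> Z)"
      using x(2) span_superset[OF AZP] by blast
  qed
  moreover have "b \<notin> span P L (A \<union> Z)"
    using not_in_span_of_independent[OF ind, of "A \<union> Z" b] assms(2-5) by blast
  ultimately show False
    by blast
qed

lemma span_Un_Int_span:
  assumes ind: "independent P L C" and "finite D"
  shows "A \<union> D \<subseteq> C \<Longrightarrow> Z \<subseteq> C \<Longrightarrow> D \<inter> (A \<union> Z) = {} \<Longrightarrow>
    x \<in> span P L (A \<union> D) \<Longrightarrow> x \<in> span P L Z \<Longrightarrow> x \<in> span P L A"
  using \<open>finite D\<close>
proof (induction D rule: finite_induct)
  case empty
  then show ?case by simp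
next
  case (insert b D)
  have "x \<in> span P L (A \<union> D)"
    using span_insert_Int_span[OF ind, of b "A \<union> D" Z] insert by auto
  then show ?case
    using insert by blast
qed

lemma span_Int_span:
  assumes ind: "independent P L C" and "Z1 \<subseteq> C" "Z2 \<subseteq> C"
  shows "span P L Z1 \<inter> span P L Z2 \<subseteq> span P L (Z1 \<inter> Z2)"
proof
  fix x
  assume x: "x \<in> span P L Z1 \<inter> span P L Z2"
  have CP: "C \<subseteq> P"
    using independent_subset_points[OF ind] .
  obtain Y where Y: "finite Y" "Y \<subseteq> Z1" "x \<in> span P L Y"
    using span_finite_support[of Z1 x] x assms CP by blast
  have "(Y \<inter> Z2) \<union> (Y - Z2) = Y"
    by blast
  then have "x \<in> span P L (Y \<inter> Z2)"
    using span_Un_Int_span[OF ind, of "Y - Z2" "Y \<inter> Z2" Z2 x] Y x assms by auto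
  then show "x \<in> span P L (Z1 \<inter> Z2)"
    using span_mono[of "Y \<inter> Z2" "Z1 \<inter> Z2"] Y assms CP by blast
qed

lemma span_INT:
  assumes ind: "independent P L C" and "finite J" "J \<noteq> {}" "\<forall>j\<in>J. Z j \<subseteq> C"
  shows "(\<Inter>j\<in>J. span P L (Z j)) \<subseteq> span P L (\<Inter>j\<in>J. Z j)"
  using assms(2-4)
proof (induction J rule: finite_ne_induct)
  case (singleton j)
  then show ?case by simp
next
  case (insert j J)
  have "(\<Inter>i\<in>insert j J. span P L (Z i)) \<subseteq> span P L (Z j) \<inter> span P L (\<Inter>i\<in>J. Z i)"
    using insert by auto
  also have "\<dots> \<subseteq> span P L (Z j \<inter> (\<Inter>i\<in>J. Z i))"
    using insert by (intro span_Int_span[OF ind]) blast+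
  finally show ?case
    by simp
qed

lemma mem_independent_if_INT_span_eq:
  assumes ind: "independent P L C" and "finite J" "J \<noteq> {}" and sub: "\<forall>j\<in>J. X j \<subseteq> C"
    and INT: "(\<Inter>j\<in>J. span P L (X j)) = {a}"
  shows "a \<in> C"
proof -
  have "a \<in> span P L (\<Inter>j\<in>J. X j)"
    using span_INT[OF assms(1-4)] INT by blast
  then have "(\<Inter>j\<in>J. X j) \<noteq> {}"
    using span_empty by force
  then obtain b where b: "b \<in> (\<Inter>j\<in>J. X j)"
    by blast
  have "C \<subseteq> P"
    using independent_subset_points[OF ind] .
  have "b \<in> span P L (X j)" if "j \<in> J" for j
  proof -
    have "X j \<subseteq> P"
      using sub that \<open>C \<subseteq> P\<close> by blast
    then show ?thesis
      using span_superset b that by blast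
  qed
  then have "b = a"
    using INT by blast
  then show ?thesis
    using b sub \<open>J \<noteq> {}\<close> by blast
qed

lemma INT_separating_eq_singleton:
  assumes ind: "independent P L B" and "finite B" "a \<in> B" "B - {a} \<noteq> {}"
    and S: "\<forall>c\<in>B - {a}. S c \<in> base_subset P L k B \<and> a \<in> S c \<and> c \<notin> S c"
  shows "(\<Inter>c\<in>B - {a}. S c) = {a}"
proof
  have BP: "B \<subseteq> P"
    using independent_subset_points[OF ind] .
  have "span P L (S c \<inter> B) = S c" if "c \<in> B - {a}" for c
    using S that span_Int_base_subset[OF _ BP] by blast
  then have "(\<Inter>c\<in>B - {a}. S c) = (\<Inter>c\<in>B - {a}. span P L (S c \<inter> B))"
    by simp
  also have "\<dots> \<subseteq> span P L (\<Inter>c\<in>B - {a}. S c \<inter> B)"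
    using assms by (intro span_INT[OF ind]) auto
  also have "\<dots> \<subseteq> span P L {a}"
    using S BP \<open>a \<in> B\<close> \<open>B - {a} \<noteq> {}\<close> by (intro span_mono) auto
  also have "\<dots> = {a}"
    using BP \<open>a \<in> B\<close> span_singleton by blast
  finally show "(\<Inter>c\<in>B - {a}. S c) \<subseteq> {a}" .
  show "{a} \<subseteq> (\<Inter>c\<in>B - {a}. S c)"
    using S by blast
qed

lemma mem_independent_if_separating:
  assumes indB: "independent P L B" and "finite B" "a \<in> B" "B - {a} \<noteq> {}"
    and indB': "independent P L B'"
    and RB: "R \<subseteq> base_subset P L k B" and RB': "R \<subseteq> base_subset P L k B'"
    and sep: "\<forall>c\<in>B - {a}. \<exists>S. S \<in> R \<and> a \<in> S \<and> c \<notin> S"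
  shows "a \<in> B'"
proof -
  from bchoice[OF sep] obtain S where S: "\<forall>c\<in>B - {a}. S c \<in> R \<and> a \<in> S c \<and> c \<notin> S c"
    by blast
  then have "\<forall>c\<in>B - {a}. S c \<in> base_subset P L k B \<and> a \<in> S c \<and> c \<notin> S c"
    using RB by blast
  then have "(\<Inter>c\<in>B - {a}. S c) = {a}"
    by (rule INT_separating_eq_singleton[OF indB \<open>finite B\<close> \<open>a \<in> B\<close> \<open>B - {a} \<noteq> {}\<close>])
  moreover have "span P L (S c \<inter> B') = S c" if "c \<in> B - {a}" for c
    using S RB' that span_Int_base_subset[OF _ independent_subset_points[OF indB']] by blast
  ultimately have INT: "(\<Inter>c\<in>B - {a}. span P L (S c \<inter> B')) = {a}"
    by simp
  have "finite (B - {a})"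
    using \<open>finite B\<close> by simp
  from mem_independent_if_INT_span_eq[OF indB' this \<open>B - {a} \<noteq> {}\<close> _ INT]
  show "a \<in> B'"
    by blast
qed

lemma exact_subset_if_separating:
  assumes B: "is_base P L B" "2 \<le> card B" and RB: "R \<subseteq> base_subset P L k B"
    and sep: "\<forall>a\<in>B. \<forall>c\<in>B. a \<noteq> c \<longrightarrow> (\<exists>S\<in>R. a \<in> S \<and> c \<notin> S)"
  shows "exact_subset P L k B R"
  unfolding exact_subset_def
proof (intro conjI allI impI RB)
  fix B'
  assume "is_base P L B' \<and> R \<subseteq> base_subset P L k B'"
  then have B': "is_base P L B'" and RB': "R \<subseteq> base_subset P L k B'"
    by auto
  note indB = is_baseD(1)[OF B(1)] and indB' = is_baseD(1)[OF B']
  have "finite B"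
    using B(2) by (simp add: card_ge_0_finite)
  have "span P L B = span P L B'"
    using is_baseD(2)[OF B(1)] is_baseD(2)[OF B'] by simp
  then have "\<not> B \<subset> B'"
    using indB' unfolding independent_def by blast
  moreover have "B \<subseteq> B'"
  proof
    fix a
    assume "a \<in> B"
    have "card (B - {a}) \<noteq> 0"
      using B(2) card_Diff_singleton[OF \<open>a \<in> B\<close>] by simp
    then have "B - {a} \<noteq> {}"
      by (metis card.empty)
    have "\<forall>c\<in>B - {a}. \<exists>S. S \<in> R \<and> a \<in> S \<and> c \<notin> S"
    proof
      fix c
      assume "c \<in> B - {a}"
      then have "c \<in> B" "a \<noteq> c"
        by auto
      then show "\<exists>S. S \<in> R \<and> a \<in> S \<and> c \<notin> S"
        using sep \<open>a \<in> B\<close> by blast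
    qed
    then show "a \<in> B'"
      using mem_independent_if_separating[OF indB \<open>finite B\<close> \<open>a \<in> B\<close> \<open>B - {a} \<noteq> {}\<close> indB' RB RB']
      by blast
  qed
  ultimately have "B' = B"
    by blast
  then show "base_subset P L k B' = base_subset P L k B"
    by simp
qed

lemma maximal_inexact_eq_avoiding_Un_containing_line:
  assumes "has_dim P L P n" "axiom_P2 L" and B: "is_base P L B" "card B = n + 1"
    and "k < n" and R: "maximal_inexact P L k B R"
  shows "\<exists>a\<in>B. \<exists>c\<in>B. a \<noteq> c \<and>
    R = base_subset_avoiding P L k B a \<union> base_subset_containing P L k B (line_of L a c)"
proof -
  have RB: "R \<subseteq> base_subset P L k B" and "\<not> exact_subset P L k B R"
    using R unfolding maximal_inexact_def inexact_subset_def by auto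
  moreover have "2 \<le> card B"
    using B(2) \<open>k < n\<close> by simp
  ultimately have "\<not> (\<forall>a\<in>B. \<forall>c\<in>B. a \<noteq> c \<longrightarrow> (\<exists>S\<in>R. a \<in> S \<and> c \<notin> S))"
    using exact_subset_if_separating[OF B(1)] by blast
  then obtain a c where "a \<in> B" "c \<in> B" "a \<noteq> c" and ac: "\<forall>S\<in>R. a \<in> S \<longrightarrow> c \<in> S"
    by blast
  define T where
    "T = base_subset_avoiding P L k B a \<union> base_subset_containing P L k B (line_of L a c)"
  have "B \<subseteq> P"
    using independent_subset_points[OF is_baseD(1)[OF B(1)]] .
  have "R \<subseteq> T"
  proof
    fix S
    assume "S \<in> R"
    then have "S \<in> base_subset P L k B"
      using RB by blast
    moreover have "line_of L a c \<subseteq> S" if "a \<in> S"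
      using subspace_of_base_subset[OF \<open>S \<in> base_subset P L k B\<close> \<open>B \<subseteq> P\<close>] ac \<open>S \<in> R\<close> that \<open>a \<noteq> c\<close>
      unfolding subspace_def by blast
    ultimately show "S \<in> T"
      unfolding T_def by blast
  qed
  moreover have "inexact_subset P L k B T"
    unfolding T_def
    by (rule inexact_subset_avoiding_Un_containing_line[OF assms(1-5) \<open>a \<in> B\<close> \<open>c \<in> B\<close> \<open>a \<noteq> c\<close>])
  then have "\<not> R \<subset> T"
    using R unfolding maximal_inexact_def inexact_subset_def by blast
  ultimately have "R = T"
    by blast
  then show ?thesis
    unfolding T_def using \<open>a \<in> B\<close> \<open>c \<in> B\<close> \<open>a \<noteq> c\<close> by blast
qed

end

theorem lemma2p3:
  fixes P :: "'a set" and L :: "'a set set" and n k :: nat and p :: "nat \<Rightarrow> 'a"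
    and R :: "'a set set"
  assumes "linear_space P L"
    and "has_dim P L P n"
    and "exchange_axiom P L"
    and "axiom_P2 L"
    and "0 < k" and "k < n - 1"
    and "inj_on p {1..n+1}"
    and "is_base P L (p ` {1..n+1})"
    and "maximal_inexact P L k (p ` {1..n+1}) R"
  shows "\<exists>i\<in>{1..n+1}. \<exists>j\<in>{1..n+1}. i \<noteq> j \<and>
           R = {S \<in> base_subset P L k (p ` {1..n+1}). p i \<notin> S}
             \<union> {S \<in> base_subset P L k (p ` {1..n+1}). line_of L (p i) (p j) \<subseteq> S}"
proof -
  interpret exchange_space P L
    using assms(1,3) by unfold_locales
  have "card (p ` {1..n+1}) = n + 1"
    using assms(7) by (simp add: card_image)
  moreover have "k < n"
    using assms(6) by simp
  ultimately obtain a c where "a \<in> p ` {1..n+1}" "c \<in> p ` {1..n+1}" "a \<noteq> c"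
    and R: "R = base_subset_avoiding P L k (p ` {1..n+1}) a
      \<union> base_subset_containing P L k (p ` {1..n+1}) (line_of L a c)"
    using maximal_inexact_eq_avoiding_Un_containing_line[OF assms(2,4,8) _ _ assms(9)] by blast
  then obtain i j where "i \<in> {1..n+1}" "j \<in> {1..n+1}" and "a = p i" "c = p j"
    by blast
  moreover from this have "i \<noteq> j"
    using \<open>a \<noteq> c\<close> by blast
  ultimately show ?thesis
    using R by blast
qed

end
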